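(* Let $$z=e^{1/2}\int_0^1 \frac{e^{-1/(2t^2)}}{t^2}\,dt .$$ For $N\ge1$ let $$R_N=\cfrac{1}{1+\cfrac{1}{1+\cfrac{2}{\ddots\,1+\cfrac{N-1}{1+N}}}}$$ (partial numerators $1,2,\dots,N$). Then $R_N\to z$ as $N\to\infty$, that is, $$z=\cfrac{1}{1+\cfrac{1}{1+\cfrac{2}{1+\cfrac{3}{1+\cfrac{4}{1+\cfrac{5}{1+\cdots}}}}}} .$$
   Context: $z$ is the value the paper assigns to the divergent series $1-1+1\cdot3-1\cdot3\cdot5+1\cdot3\cdot5\cdot7-\cdots$. *)

theory Defs
  imports "HOL-Analysis.Analysis"
begin

text \<open>Tail of the continued fraction: cf_tail N k is
  1 + k/(1 + (k+1)/( ... (N-1)/(1+N))) for 1 \<le> k < N, and cf_tail N N = 1 + N.\<close>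
function cf_tail :: "nat \<Rightarrow> nat \<Rightarrow> real" where
  "cf_tail N k = (if N \<le> k then 1 + real N else 1 + real k / cf_tail N (Suc k))"
  by auto
termination by (relation "Wellfounded.measure (\<lambda>(N, k). N - k)") auto

definition R :: "nat \<Rightarrow> real" where
  "R N = 1 / cf_tail N 1"

definition z :: real where
  "z = exp (1/2) * integral {0..1} (\<lambda>t::real. exp (- 1 / (2 * t^2)) / t^2)"

end

theory Submission imports Defs "HOL-Real_Asymp.Real_Asymp" begin

text \<open>The moments \<open>I k = \<integral>\<^sub>0\<^sup>1 (1/t - 1)^k exp (-1/(2t\<^sup>2)) / t\<^sup>2 dt\<close> satisfy, by
  integrating the derivative of \<open>(1/t - 1)^k exp (-1/(2t\<^sup>2))\<close>, the three-term recurrence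
  \<open>I (k+1) + I k = k I (k-1)\<close> for \<open>k \<ge> 1\<close>, together with \<open>I 1 + I 0 = exp (-1/2)\<close>.
  Any solution \<open>h\<close> of this recurrence with \<open>h (N+1) = 0\<close> evaluates the continued fraction
  backwards: \<open>R N = h 0 / (h 0 + h 1)\<close>. The recurrence has a second solution \<open>(-1)^k a k\<close>
  that dominates the moments, since \<open>I k \<le> exp (-1/2) (k-1)!!\<close> while
  \<open>a k \<ge> (k-1)!! H (k+1) / 2\<close> with \<open>H\<close> the harmonic numbers. Taking for \<open>h\<close> the moments minus
  the multiple of \<open>(-1)^k a k\<close> that vanishes at \<open>N+1\<close> gives
  \<open>R N = z - exp (1/2) I (N+1) / ((-1)^(N+1) a (N+1))\<close>, which tends to \<open>z\<close>.\<close>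

lemma tendsto_exp_neg_inv_square_div_power:
  "((\<lambda>t::real. exp (- 1 / (2 * t^2)) / t^n) \<longlongrightarrow> 0) (at_right 0)"
proof -
  have "((\<lambda>y::real. y^n / exp y) \<longlongrightarrow> 0) at_top"
    by (rule tendsto_power_div_exp_0)
  moreover have "filterlim (\<lambda>t::real. 1 / (2 * t^2)) at_top (at_right 0)"
    by real_asymp
  ultimately have "((\<lambda>t. (1 / (2 * t^2))^n / exp (1 / (2 * t^2))) \<longlongrightarrow> 0) (at_right (0::real))"
    by (rule filterlim_compose)
  then have lim: "((\<lambda>t. 2^n * ((1 / (2 * t^2))^n / exp (1 / (2 * t^2)))) \<longlongrightarrow> 0)
      (at_right (0::real))"
    by (rule tendsto_mult_right_zero)
  have ev: "eventually (\<lambda>t::real. t \<in> {0<..<1}) (at_right 0)"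
    by (rule eventually_at_right_real) simp
  show ?thesis
  proof (rule tendsto_sandwich[OF _ _ tendsto_const lim])
    show "eventually (\<lambda>t::real. 0 \<le> exp (- 1 / (2 * t^2)) / t^n) (at_right 0)"
      using ev by eventually_elim simp
    show "eventually (\<lambda>t::real. exp (- 1 / (2 * t^2)) / t^n
        \<le> 2^n * ((1 / (2 * t^2))^n / exp (1 / (2 * t^2)))) (at_right 0)"
      using ev
    proof eventually_elim
      case (elim t)
      then have t: "0 < t" "t < 1" by auto
      have "t^(2 * n) \<le> t^n"
        using t by (intro power_decreasing) auto
      then have "exp (- 1 / (2 * t^2)) / t^n \<le> exp (- 1 / (2 * t^2)) / t^(2 * n)"
        using t by (intro divide_left_mono) auto
      also have "\<dots> = 2^n * ((1 / (2 * t^2))^n / exp (1 / (2 * t^2)))"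
        using t by (simp add: power_mult_distrib power_mult exp_minus field_simps power2_eq_square)
      finally show ?case .
    qed
  qed
qed

lemma tendsto_moment_weight_at_0:
  "((\<lambda>t::real. (1/t - 1)^k * exp (- 1 / (2 * t^2)) / t^m) \<longlongrightarrow> 0) (at_right 0)"
proof -
  have ev: "eventually (\<lambda>t::real. t \<in> {0<..<1}) (at_right 0)"
    by (rule eventually_at_right_real) simp
  show ?thesis
  proof (rule tendsto_sandwich[OF _ _ tendsto_const tendsto_exp_neg_inv_square_div_power[of "k + m"]])
    show "eventually (\<lambda>t::real. 0 \<le> (1/t - 1)^k * exp (- 1 / (2 * t^2)) / t^m) (at_right 0)"
      using ev by eventually_elim (simp add: field_simps)
    show "eventually (\<lambda>t::real. (1/t - 1)^k * exp (- 1 / (2 * t^2)) / t^m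
        \<le> exp (- 1 / (2 * t^2)) / t^(k + m)) (at_right 0)"
      using ev
    proof eventually_elim
      case (elim t)
      then have t: "0 < t" "t < 1" by auto
      have "(1/t - 1)^k \<le> (1/t)^k"
        using t by (intro power_mono) (auto simp: field_simps)
      then have "(1/t - 1)^k * exp (- 1 / (2 * t^2)) / t^m \<le> (1/t)^k * exp (- 1 / (2 * t^2)) / t^m"
        using t by (intro divide_right_mono mult_right_mono) auto
      also have "\<dots> = exp (- 1 / (2 * t^2)) / t^(k + m)"
        using t by (simp add: power_add field_simps)
      finally show ?case .
    qed
  qed
qed

definition moment_integrand :: "nat \<Rightarrow> real \<Rightarrow> real" where
  "moment_integrand k t = (1/t - 1)^k * exp (- 1 / (2 * t^2)) / t^2"

definition moment :: "nat \<Rightarrow> real" where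
  "moment k = integral {0..1} (moment_integrand k)"

definition moment_primitive :: "nat \<Rightarrow> real \<Rightarrow> real" where
  "moment_primitive k t = (if t = 0 then 0 else (1/t - 1)^k * exp (- 1 / (2 * t^2)))"

lemma continuous_on_moment_integrand: "continuous_on {0..1} (moment_integrand k)"
proof (rule continuous_on_IccI)
  have cont: "isCont (moment_integrand k) t" if "t \<noteq> 0" for t
    using that unfolding moment_integrand_def by (intro continuous_intros) auto
  show "(moment_integrand k \<longlongrightarrow> moment_integrand k 0) (at_right 0)"
    using tendsto_moment_weight_at_0[of k 2] by (simp add: moment_integrand_def[abs_def])
  show "(moment_integrand k \<longlongrightarrow> moment_integrand k 1) (at_left 1)"
    using cont[of 1] unfolding isCont_def filterlim_at_split by simp
  show "moment_integrand k \<midarrow>t\<rightarrow> moment_integrand k t" if "0 < t" "t < 1" for t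
    using cont[of t] that by (simp add: isCont_def)
qed auto

lemma moment_integrand_integrable: "moment_integrand k integrable_on {0..1}"
  by (rule integrable_continuous_real[OF continuous_on_moment_integrand])

lemma continuous_on_moment_primitive: "continuous_on {0..1} (moment_primitive k)"
proof (rule continuous_on_IccI)
  have "((\<lambda>t::real. (1/t - 1)^k * exp (- 1 / (2 * t^2))) \<longlongrightarrow> 0) (at_right 0)"
    using tendsto_moment_weight_at_0[of k 0] by simp
  moreover have "eventually (\<lambda>t::real. (1/t - 1)^k * exp (- 1 / (2 * t^2)) = moment_primitive k t)
      (at_right 0)"
    using eventually_at_right_less[of "0::real"]
    by eventually_elim (auto simp: moment_primitive_def)
  ultimately have "(moment_primitive k \<longlongrightarrow> 0) (at_right 0)"
    by (rule tendsto_cong[THEN iffD1, rotated])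
  then show "(moment_primitive k \<longlongrightarrow> moment_primitive k 0) (at_right 0)"
    by (simp add: moment_primitive_def)
  have cont: "isCont (moment_primitive k) t" if "0 < t" for t
  proof -
    have "isCont (\<lambda>t::real. (1/t - 1)^k * exp (- 1 / (2 * t^2))) t"
      using that by (intro continuous_intros) auto
    moreover have "eventually (\<lambda>s. (1/s - 1)^k * exp (- 1 / (2 * s^2)) = moment_primitive k s) (nhds t)"
      using eventually_nhds_in_open[of "{0<..}" t] that
      by (auto elim!: eventually_mono simp: moment_primitive_def)
    ultimately show ?thesis
      by (rule isCont_cong[THEN iffD1, rotated])
  qed
  show "(moment_primitive k \<longlongrightarrow> moment_primitive k 1) (at_left 1)"
    using cont[of 1] unfolding isCont_def filterlim_at_split by simp
  show "moment_primitive k \<midarrow>t\<rightarrow> moment_primitive k t" if "0 < t" "t < 1" for t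
    using cont[of t] that by (simp add: isCont_def)
qed auto

lemma has_field_derivative_moment_primitive:
  assumes "0 < t"
  shows "(moment_primitive k has_field_derivative
    moment_integrand (Suc k) t + moment_integrand k t - real k * moment_integrand (k - 1) t) (at t)"
proof -
  have "((\<lambda>s. (1/s - 1)^k * exp (- 1 / (2 * s^2))) has_field_derivative
      real k * (1/t - 1)^(k - 1) * (- 1 / t^2) * exp (- 1 / (2 * t^2))
      + (1/t - 1)^k * (exp (- 1 / (2 * t^2)) * (1 / t^3))) (at t)"
    using assms
    by (auto intro!: derivative_eq_intros simp: field_simps power2_eq_square power3_eq_cube)
  moreover
  have "real k * (1/t - 1)^(k - 1) * (- 1 / t^2) * exp (- 1 / (2 * t^2))
      + (1/t - 1)^k * (exp (- 1 / (2 * t^2)) * (1 / t^3))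
    = moment_integrand (Suc k) t + moment_integrand k t - real k * moment_integrand (k - 1) t"
  proof -
    define w where "w = 1/t - 1"
    define E where "E = exp (- 1 / (2 * t^2))"
    have "w^Suc k * E / t^2 + w^k * E / t^2 = w^k * (w + 1) * E / t^2"
      by (simp add: add_divide_distrib algebra_simps)
    also have "\<dots> = w^k * (E * (1 / t^3))"
      using assms by (simp add: w_def power2_eq_square power3_eq_cube)
    finally show ?thesis
      unfolding moment_integrand_def w_def[symmetric] E_def[symmetric] by (simp add: field_simps)
  qed
  ultimately have "((\<lambda>s. (1/s - 1)^k * exp (- 1 / (2 * s^2))) has_field_derivative
      moment_integrand (Suc k) t + moment_integrand k t - real k * moment_integrand (k - 1) t) (at t)"
    by simp
  then show ?thesis
    by (rule has_field_derivative_transform_within_open[of _ _ _ "{0<..}"])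
       (use assms in \<open>auto simp: moment_primitive_def\<close>)
qed

text \<open>The factor \<open>0 ^ k\<close> is \<open>1\<close> for \<open>k = 0\<close> and \<open>0\<close> otherwise.\<close>
lemma moment_recurrence:
  "moment (Suc k) + moment k - real k * moment (k - 1) = 0^k * exp (- 1 / 2)"
proof -
  have "((\<lambda>t. moment_integrand (Suc k) t + moment_integrand k t - real k * moment_integrand (k - 1) t)
      has_integral (moment_primitive k 1 - moment_primitive k 0)) {0..1}"
  proof (rule fundamental_theorem_of_calculus_interior)
    fix t :: real
    assume "t \<in> {0<..<1}"
    then show "(moment_primitive k has_vector_derivative
        moment_integrand (Suc k) t + moment_integrand k t - real k * moment_integrand (k - 1) t) (at t)"
      using has_field_derivative_moment_primitive[of t k]
      by (simp add: has_real_derivative_iff_has_vector_derivative)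
  qed (auto intro: continuous_on_moment_primitive)
  moreover have "((\<lambda>t. moment_integrand (Suc k) t + moment_integrand k t - real k * moment_integrand (k - 1) t)
      has_integral (moment (Suc k) + moment k - real k * moment (k - 1))) {0..1}"
    unfolding moment_def
    by (intro has_integral_diff has_integral_add has_integral_mult_right integrable_integral
        moment_integrand_integrable)
  ultimately have "moment_primitive k 1 - moment_primitive k 0
      = moment (Suc k) + moment k - real k * moment (k - 1)"
    by (rule has_integral_unique)
  then show ?thesis
    by (simp add: moment_primitive_def)
qed

lemma moment_nonneg: "0 \<le> moment k"
  unfolding moment_def
proof (rule integral_nonneg[OF moment_integrand_integrable])
  fix t :: real
  assume t: "t \<in> {0..1}"
  show "0 \<le> moment_integrand k t"
  proof (cases "t = 0")
    case False
    then have "0 \<le> 1/t - 1"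
      using t by (simp add: le_divide_eq)
    then show ?thesis
      unfolding moment_integrand_def by simp
  qed (simp add: moment_integrand_def)
qed

text \<open>\<open>dfact k = (k - 1)!!\<close>, with \<open>(-1)!! = 0!! = 1\<close>.\<close>
fun dfact :: "nat \<Rightarrow> real" where
  "dfact 0 = 1"
| "dfact (Suc 0) = 1"
| "dfact (Suc (Suc k)) = real (Suc k) * dfact k"

lemma dfact_pos: "0 < dfact k"
  by (induction k rule: dfact.induct) auto

lemma dfact_Suc_bounds: "dfact k \<le> dfact (Suc k) \<and> dfact (Suc k) \<le> real (Suc k) * dfact k"
proof (induction k)
  case (Suc k)
  have "real (Suc k) * dfact k \<le> real (Suc k) * dfact (Suc k)"
    using Suc by (intro mult_left_mono) auto
  then show ?case
    using Suc dfact_pos[of "Suc k"] by (auto simp: algebra_simps)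
qed simp

lemma moment_le_dfact: "moment k \<le> exp (- 1 / 2) * dfact k"
proof (induction k rule: dfact.induct)
  case 1
  then show ?case
    using moment_recurrence[of 0] moment_nonneg[of 1] by simp
next
  case 2
  then show ?case
    using moment_recurrence[of 0] moment_nonneg[of 0] by simp
next
  case (3 k)
  have "moment (Suc (Suc k)) \<le> real (Suc k) * moment k"
    using moment_recurrence[of "Suc k"] moment_nonneg[of "Suc k"] by simp
  also have "\<dots> \<le> real (Suc k) * (exp (- 1 / 2) * dfact k)"
    using 3 by (intro mult_left_mono) auto
  finally show ?case
    by (simp add: mult_ac)
qed

text \<open>\<open>(-1)^k * dominant k\<close> is a second solution of the moment recurrence.\<close>
fun dominant :: "nat \<Rightarrow> real" where
  "dominant 0 = 1"
| "dominant (Suc 0) = 1"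
| "dominant (Suc (Suc k)) = real (Suc k) * dominant k + dominant (Suc k)"

lemma dfact_le_dominant: "dfact k \<le> dominant k"
proof (induction k rule: dominant.induct)
  case (3 k)
  have "real (Suc k) * dfact k \<le> real (Suc k) * dominant k"
    using 3 by (intro mult_left_mono) auto
  moreover have "0 \<le> dominant (Suc k)"
    using 3 dfact_pos[of "Suc k"] by linarith
  ultimately show ?case
    by (simp only: dfact.simps dominant.simps)
qed simp_all

lemma dominant_pos: "0 < dominant k"
  using dfact_le_dominant[of k] dfact_pos[of k] by linarith

lemma dfact_harm_le_dominant: "dfact k * harm (Suc k) / 2 \<le> dominant k"
proof (induction k rule: dominant.induct)
  case (3 k)
  define H where "H = harm (Suc k) / (2::real)"
  have "dfact (Suc (Suc k)) \<le> real (Suc (Suc k)) * dfact (Suc k)"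
    using dfact_Suc_bounds[of "Suc k"] by simp
  then have dfact_Suc: "dfact (Suc (Suc k)) / real (Suc (Suc k)) \<le> dfact (Suc k)"
    by (simp add: divide_le_eq mult.commute del: of_nat_Suc)
  have "harm (Suc (Suc (Suc k))) / 2 \<le> H + 1 / real (Suc (Suc k))"
  proof -
    have "harm (Suc (Suc (Suc k))) = harm (Suc k) + 1 / real (Suc (Suc k)) + 1 / real (Suc (Suc (Suc k)))"
      by (simp add: harm_Suc inverse_eq_divide)
    moreover have "1 / real (Suc (Suc (Suc k))) \<le> 1 / real (Suc (Suc k))"
      by (intro divide_left_mono) auto
    ultimately show ?thesis
      unfolding H_def by linarith
  qed
  then have "dfact (Suc (Suc k)) * (harm (Suc (Suc (Suc k))) / 2)
      \<le> dfact (Suc (Suc k)) * (H + 1 / real (Suc (Suc k)))"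
    using dfact_pos[of "Suc (Suc k)"] by (intro mult_left_mono) auto
  also have "\<dots> = real (Suc k) * (dfact k * H) + dfact (Suc (Suc k)) / real (Suc (Suc k))"
    by (simp add: algebra_simps)
  also have "\<dots> \<le> real (Suc k) * dominant k + dominant (Suc k)"
    using 3 dfact_Suc dfact_le_dominant[of "Suc k"] unfolding H_def
    by (intro add_mono mult_left_mono) auto
  finally show ?case
    by simp
qed (simp_all add: harm_def)

lemma moment_div_dominant_tendsto_0: "(\<lambda>k. moment k / dominant k) \<longlonglongrightarrow> 0"
proof (rule tendsto_sandwich[OF _ _ tendsto_const])
  have "filterlim (\<lambda>k. harm (Suc k) :: real) at_top sequentially"
    by (rule filterlim_compose[OF harm_at_top filterlim_Suc])
  then show "(\<lambda>k. 2 * exp (- 1 / 2) / harm (Suc k) :: real) \<longlonglongrightarrow> 0"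
    by (intro tendsto_divide_0[OF tendsto_const] filterlim_at_top_imp_at_infinity)
  show "eventually (\<lambda>k. 0 \<le> moment k / dominant k) sequentially"
    using moment_nonneg dominant_pos by (simp add: less_imp_le)
  show "eventually (\<lambda>k. moment k / dominant k \<le> 2 * exp (- 1 / 2) / harm (Suc k)) sequentially"
  proof (intro always_eventually allI)
    fix k
    have "0 < harm (Suc k) * dfact k"
      using dfact_pos[of k] by (simp add: harm_pos)
    then have "moment k / dominant k \<le> exp (- 1 / 2) * dfact k / (dfact k * harm (Suc k) / 2)"
      using moment_le_dfact[of k] dfact_harm_le_dominant[of k] moment_nonneg[of k]
      by (intro frac_le) (auto simp: mult.commute)
    also have "\<dots> = 2 * exp (- 1 / 2) / harm (Suc k)"
      using dfact_pos[of k] by (simp add: field_simps)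
    finally show "moment k / dominant k \<le> 2 * exp (- 1 / 2) / harm (Suc k)" .
  qed
qed

lemma cf_tail_self: "cf_tail N N = 1 + real N"
  by simp

lemma cf_tail_less: "k < N \<Longrightarrow> cf_tail N k = 1 + real k / cf_tail N (Suc k)"
  by simp

declare cf_tail.simps [simp del]

lemma backward_solution_pos:
  fixes h :: "nat \<Rightarrow> real"
  assumes rec: "\<And>k. h (Suc (Suc k)) + h (Suc k) = real (Suc k) * h k"
    and vanish: "h (Suc N) = 0"
    and start_nonzero: "h 0 + h 1 \<noteq> 0"
    and "n \<le> N"
  shows "0 < h N * h n"
proof -
  have step_back: "h k = (h (Suc (Suc k)) + h (Suc k)) / real (Suc k)" for k
    using rec[of k] by (simp add: field_simps del: of_nat_Suc)
  have "h N \<noteq> 0"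
  proof
    assume "h N = 0"
    have "h n = 0 \<and> h (Suc n) = 0" if "n \<le> N" for n
      using that
    proof (induction rule: inc_induct)
      case base
      then show ?case using \<open>h N = 0\<close> vanish by simp
    next
      case (step n)
      then show ?case using step_back[of n] by simp
    qed
    from this[of 0] show False
      using start_nonzero by simp
  qed
  have "0 < h N * h n \<and> 0 \<le> h N * h (Suc n)"
    using \<open>n \<le> N\<close>
  proof (induction rule: inc_induct)
    case base
    then show ?case using \<open>h N \<noteq> 0\<close> vanish by (auto simp: zero_less_mult_iff)
  next
    case (step n)
    have "h N * h n = (h N * h (Suc (Suc n)) + h N * h (Suc n)) / real (Suc n)"
      by (subst step_back) (simp add: field_simps del: of_nat_Suc)
    also have "\<dots> > 0"
      using step by (intro divide_pos_pos) auto
    finally show ?case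
      using step by simp
  qed
  then show ?thesis by simp
qed

text \<open>The tails of the continued fraction are the ratios \<open>cf_tail N j = (h (j-1) + h j) / h (j-1)\<close>
  of any solution vanishing at \<open>N + 1\<close>.\<close>
lemma R_eq_solution_ratio:
  fixes h :: "nat \<Rightarrow> real"
  assumes "1 \<le> N"
    and rec: "\<And>k. h (Suc (Suc k)) + h (Suc k) = real (Suc k) * h k"
    and vanish: "h (Suc N) = 0"
    and start_nonzero: "h 0 + h 1 \<noteq> 0"
  shows "R N = h 0 / (h 0 + h 1)"
proof -
  have nonzero: "h n \<noteq> 0" if "n \<le> N" for n
    using backward_solution_pos[OF rec vanish start_nonzero that] by auto
  have tail: "cf_tail N j = (h (j - 1) + h j) / h (j - 1)" if "1 \<le> j" "j \<le> N" for j
    using that(2,1)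
  proof (induction rule: inc_induct)
    case base
    obtain m where m: "N = Suc m"
      using \<open>1 \<le> N\<close> by (cases N) auto
    have "h N = real N * h m"
      using rec[of m] vanish m by simp
    then show ?case
      using nonzero[of m] m by (simp add: cf_tail_self field_simps)
  next
    case (step n)
    obtain m where m: "n = Suc m"
      using step by (cases n) auto
    have "cf_tail N n = 1 + real n / ((h n + h (Suc n)) / h n)"
      using step by (simp add: cf_tail_less)
    also have "\<dots> = 1 + real n * h n / (real n * h m)"
      using rec[of m] m nonzero[of n] step by (simp add: algebra_simps)
    also have "\<dots> = (h (n - 1) + h n) / h (n - 1)"
      using m nonzero[of m] step by (simp add: field_simps del: of_nat_Suc)
    finally show ?case .
  qed
  show ?thesis
    unfolding R_def using tail[of 1] nonzero[of 0] \<open>1 \<le> N\<close> by simp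
qed

lemma signed_dominant_recurrence:
  "(-1)^Suc (Suc k) * dominant (Suc (Suc k)) + (-1)^Suc k * dominant (Suc k)
    = real (Suc k) * ((-1)^k * dominant k)"
  by (simp add: algebra_simps)

lemma R_eq_z_minus_remainder:
  assumes "1 \<le> N"
  shows "R N = z - exp (1/2) * (moment (Suc N) / ((-1)^Suc N * dominant (Suc N)))"
proof -
  define c where "c = moment (Suc N) / ((-1)^Suc N * dominant (Suc N))"
  define h where "h k = moment k - c * ((-1)^k * dominant k)" for k
  have rec: "h (Suc (Suc k)) + h (Suc k) = real (Suc k) * h k" for k
    using moment_recurrence[of "Suc k"] signed_dominant_recurrence[of k]
    unfolding h_def by (simp add: algebra_simps)
  have vanish: "h (Suc N) = 0"
    unfolding h_def c_def using dominant_pos[of "Suc N"] by simp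
  have start: "h 0 + h 1 = exp (- 1 / 2)"
    using moment_recurrence[of 0] by (simp add: h_def)
  have "R N = h 0 / (h 0 + h 1)"
    by (rule R_eq_solution_ratio[OF assms rec vanish]) (simp add: start[unfolded One_nat_def])
  also have "\<dots> = exp (1/2) * (moment 0 - c)"
    unfolding start by (simp add: h_def exp_minus field_simps)
  also have "\<dots> = z - exp (1/2) * c"
    unfolding z_def moment_def moment_integrand_def by (simp add: right_diff_distrib)
  finally show ?thesis
    by (simp add: c_def)
qed

theorem mainTheorem5:
  shows "R \<longlonglongrightarrow> z"
proof -
  have "(\<lambda>N. \<bar>moment (Suc N) / ((-1)^Suc N * dominant (Suc N))\<bar>) \<longlonglongrightarrow> 0"
    using LIMSEQ_Suc[OF moment_div_dominant_tendsto_0] moment_nonneg dominant_pos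
    by (simp add: abs_mult less_imp_le)
  then have "(\<lambda>N. moment (Suc N) / ((-1)^Suc N * dominant (Suc N))) \<longlonglongrightarrow> 0"
    by (rule tendsto_rabs_zero_cancel)
  then have "(\<lambda>N. z - exp (1/2) * (moment (Suc N) / ((-1)^Suc N * dominant (Suc N))))
      \<longlonglongrightarrow> z - exp (1/2) * 0"
    by (intro tendsto_intros)
  then have "(\<lambda>N. z - exp (1/2) * (moment (Suc N) / ((-1)^Suc N * dominant (Suc N)))) \<longlonglongrightarrow> z"
    by simp
  moreover have "eventually (\<lambda>N. z - exp (1/2) * (moment (Suc N) / ((-1)^Suc N * dominant (Suc N)))
      = R N) sequentially"
    using eventually_ge_at_top[of 1] by eventually_elim (simp add: R_eq_z_minus_remainder)
  ultimately show ?thesis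
    by (rule tendsto_cong[THEN iffD1, rotated])
qed

end
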